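(* Let $(G,k)$ be an instance of \textsc{Bicolored $P_3$ Deletion} and let $u,v,w,z_1,z_2$ be vertices such that $G[\{u,v,w,z_1,z_2\}]$ is a CC-Hourglass (with the vertex labels as in the definition). Then $(G,k)$ is a yes-instance if and only if at least one of $(G-\{v,w\},k-1)$, $(G-\{\{u,v\},\{v,z_1\}\},k-2)$, $(G-\{\{u,v\},\{u,z_1\},\{v,z_2\}\},k-3)$ is a yes-instance.
   Context: A two-colored graph $G=(V,E_r,E_b)$ is a finite simple undirected graph whose edge set $E=E_r\uplus E_b$ is partitioned into red and blue edges; $G-F$ removes the edges in $F$ (and $G-\{v,w\}$ removes the single edge $\{v,w\}$). A bicolored $P_3$ is an induced subgraph on three vertices $a,b,c$ with edges $\{a,b\},\{b,c\}$ of different colors and $\{a,c\}\notin E$. A CC-Hourglass on $u,v,w,z_1,z_2$ is an induced subgraph whose edges are exactly $\{u,v\}$ blue, $\{v,w\}$ red, $\{u,z_1\}$ blue, $\{v,z_1\}$ red, $\{v,z_2\}$ blue, $\{w,z_2\}$ red, or the same with the two colors swapped. \textsc{Bicolored $P_3$ Deletion}: given $G$ and an integer $k$, decide whether some $S\subseteq E$ with $|S|\le k$ makes $G-S$ free of induced bicolored $P_3$s (no-instance if $k<0$). *)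

theory Defs
  imports Main
begin

definition two_colored_graph :: "'a set \<Rightarrow> 'a set set \<Rightarrow> 'a set set \<Rightarrow> bool" where
  "two_colored_graph V Er Eb \<longleftrightarrow> finite V \<and> Er \<inter> Eb = {} \<and>
     (\<forall>e \<in> Er \<union> Eb. \<exists>x y. x \<in> V \<and> y \<in> V \<and> x \<noteq> y \<and> e = {x, y})"

definition bicolored_P3 :: "'a set \<Rightarrow> 'a set set \<Rightarrow> 'a set set \<Rightarrow> 'a \<Rightarrow> 'a \<Rightarrow> 'a \<Rightarrow> bool" where
  "bicolored_P3 V Er Eb a b c \<longleftrightarrow> a \<in> V \<and> b \<in> V \<and> c \<in> V \<and>
     a \<noteq> b \<and> b \<noteq> c \<and> a \<noteq> c \<and>
     (({a, b} \<in> Er \<and> {b, c} \<in> Eb) \<or> ({a, b} \<in> Eb \<and> {b, c} \<in> Er)) \<and>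
     {a, c} \<notin> Er \<union> Eb"

definition P3_free :: "'a set \<Rightarrow> 'a set set \<Rightarrow> 'a set set \<Rightarrow> bool" where
  "P3_free V Er Eb \<longleftrightarrow> \<not> (\<exists>a b c. bicolored_P3 V Er Eb a b c)"

definition yes_instance :: "'a set \<Rightarrow> 'a set set \<Rightarrow> 'a set set \<Rightarrow> int \<Rightarrow> bool" where
  "yes_instance V Er Eb k \<longleftrightarrow> k \<ge> 0 \<and>
     (\<exists>S. S \<subseteq> Er \<union> Eb \<and> int (card S) \<le> k \<and> P3_free V (Er - S) (Eb - S))"

definition hourglass_pattern ::
  "'a set set \<Rightarrow> 'a set set \<Rightarrow> 'a \<Rightarrow> 'a \<Rightarrow> 'a \<Rightarrow> 'a \<Rightarrow> 'a \<Rightarrow> bool" where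
  "hourglass_pattern R B u v w z1 z2 \<longleftrightarrow>
     {u, v} \<in> B \<and> {v, w} \<in> R \<and> {u, z1} \<in> B \<and> {v, z1} \<in> R \<and>
     {v, z2} \<in> B \<and> {w, z2} \<in> R \<and>
     {u, w} \<notin> R \<union> B \<and> {u, z2} \<notin> R \<union> B \<and> {w, z1} \<notin> R \<union> B \<and> {z1, z2} \<notin> R \<union> B"

definition cc_hourglass ::
  "'a set \<Rightarrow> 'a set set \<Rightarrow> 'a set set \<Rightarrow> 'a \<Rightarrow> 'a \<Rightarrow> 'a \<Rightarrow> 'a \<Rightarrow> 'a \<Rightarrow> bool" where
  "cc_hourglass V Er Eb u v w z1 z2 \<longleftrightarrow>
     {u, v, w, z1, z2} \<subseteq> V \<and> distinct [u, v, w, z1, z2] \<and>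
     (hourglass_pattern Er Eb u v w z1 z2 \<or> hourglass_pattern Eb Er u v w z1 z2)"

end

theory Submission
  imports Defs
begin

text \<open>A solution must destroy the bicolored P3s u-v-w and z1-v-z2 of the hourglass, and a P3
  is destroyed only by deleting one of its two edges. If the solution keeps vw, it deletes uv;
  then u-z1-v becomes a bicolored P3, so it also deletes vz1, or else it deletes uz1 together
  with vz2 (forced by z1-v-z2). Hence every solution contains one of the three edge sets, and
  conversely deleting such a set and solving the remainder solves the original instance.\<close>

lemma two_colored_graph_finite_edges:
  assumes "two_colored_graph V Er Eb"
  shows "finite (Er \<union> Eb)"
proof (rule finite_subset)
  show "Er \<union> Eb \<subseteq> Pow V"
  proof
    fix e
    assume "e \<in> Er \<union> Eb"
    then obtain x y where "x \<in> V" "y \<in> V" "e = {x, y}"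
      using assms unfolding two_colored_graph_def by meson
    then show "e \<in> Pow V"
      by simp
  qed
  show "finite (Pow V)"
    using assms unfolding two_colored_graph_def by simp
qed

lemma bicolored_P3_delete_edges:
  assumes "bicolored_P3 V Er Eb a b c" "{a, b} \<notin> S" "{b, c} \<notin> S"
  shows "bicolored_P3 V (Er - S) (Eb - S) a b c"
  using assms unfolding bicolored_P3_def by blast

lemma P3_free_delete_edges_hits_P3:
  assumes "P3_free V (Er - S) (Eb - S)" "bicolored_P3 V (Er - T) (Eb - T) a b c" "T \<subseteq> S"
  shows "{a, b} \<in> S \<or> {b, c} \<in> S"
proof (rule ccontr)
  assume "\<not> ?thesis"
  then have "bicolored_P3 V (Er - T - S) (Eb - T - S) a b c"
    using assms(2) by (simp add: bicolored_P3_delete_edges)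
  moreover have "Er - T - S = Er - S" "Eb - T - S = Eb - S"
    using assms(3) by auto
  ultimately show False
    using assms(1) unfolding P3_free_def by metis
qed

lemma yes_instance_from_delete_edges:
  assumes "D \<subseteq> Er \<union> Eb" "yes_instance V (Er - D) (Eb - D) (k - int (card D))"
  shows "yes_instance V Er Eb k"
proof -
  obtain S where S: "S \<subseteq> (Er - D) \<union> (Eb - D)" "int (card S) \<le> k - int (card D)"
      "P3_free V (Er - D - S) (Eb - D - S)"
    and "k - int (card D) \<ge> 0"
    using assms(2) unfolding yes_instance_def by blast
  moreover have "card (S \<union> D) \<le> card S + card D"
    by (rule card_Un_le)
  moreover have "Er - (S \<union> D) = Er - D - S" "Eb - (S \<union> D) = Eb - D - S"
    by auto
  ultimately show ?thesis
    unfolding yes_instance_def using assms(1) by (intro conjI exI[of _ "S \<union> D"]) auto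
qed

lemma yes_instance_delete_subset_of_solution:
  assumes "finite S" "D \<subseteq> S" "S \<subseteq> Er \<union> Eb" "int (card S) \<le> k"
    "P3_free V (Er - S) (Eb - S)"
  shows "yes_instance V (Er - D) (Eb - D) (k - int (card D))"
proof -
  have "card (S - D) = card S - card D" "card D \<le> card S"
    using assms(1,2) by (simp_all add: card_Diff_subset finite_subset card_mono)
  moreover have "Er - D - (S - D) = Er - S" "Eb - D - (S - D) = Eb - S"
    using assms(2) by auto
  ultimately show ?thesis
    unfolding yes_instance_def using assms by (intro conjI exI[of _ "S - D"]) auto
qed

lemma yes_instance_branching:
  assumes "finite (Er \<union> Eb)" "\<forall>D \<in> \<D>. D \<subseteq> Er \<union> Eb"
    and "\<And>S. S \<subseteq> Er \<union> Eb \<Longrightarrow> P3_free V (Er - S) (Eb - S) \<Longrightarrow> \<exists>D \<in> \<D>. D \<subseteq> S"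
  shows "yes_instance V Er Eb k \<longleftrightarrow>
           (\<exists>D \<in> \<D>. yes_instance V (Er - D) (Eb - D) (k - int (card D)))"
proof
  assume "yes_instance V Er Eb k"
  then obtain S where S: "S \<subseteq> Er \<union> Eb" "int (card S) \<le> k" "P3_free V (Er - S) (Eb - S)"
    unfolding yes_instance_def by blast
  obtain D where D: "D \<in> \<D>" "D \<subseteq> S"
    using assms(3)[OF S(1,3)] by blast
  have "finite S"
    using S(1) assms(1) by (rule finite_subset)
  from yes_instance_delete_subset_of_solution[OF this D(2) S] D(1)
  show "\<exists>D \<in> \<D>. yes_instance V (Er - D) (Eb - D) (k - int (card D))"
    by blast
next
  assume "\<exists>D \<in> \<D>. yes_instance V (Er - D) (Eb - D) (k - int (card D))"
  then obtain D where "D \<in> \<D>" "yes_instance V (Er - D) (Eb - D) (k - int (card D))"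
    by blast
  with assms(2) show "yes_instance V Er Eb k"
    by (blast intro: yes_instance_from_delete_edges)
qed

lemma bicolored_P3_swap_colours:
  "bicolored_P3 V B R a b c \<longleftrightarrow> bicolored_P3 V R B a b c"
  unfolding bicolored_P3_def by blast

lemma hourglass_pattern_bicolored_P3s:
  assumes "hourglass_pattern R B u v w z1 z2" "{u, v, w, z1, z2} \<subseteq> V"
    "distinct [u, v, w, z1, z2]"
  shows "bicolored_P3 V R B u v w" "bicolored_P3 V R B z1 v z2"
    "bicolored_P3 V (R - {{u, v}}) (B - {{u, v}}) u z1 v"
proof -
  have "{z1, v} = {v, z1}"
    by (rule insert_commute)
  moreover have "{u, z1} \<noteq> {u, v}" "{v, z1} \<noteq> {u, v}"
    using assms(3) by (auto simp: doubleton_eq_iff)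
  ultimately show "bicolored_P3 V R B u v w" "bicolored_P3 V R B z1 v z2"
    "bicolored_P3 V (R - {{u, v}}) (B - {{u, v}}) u z1 v"
    using assms unfolding hourglass_pattern_def bicolored_P3_def by auto
qed

lemma cc_hourglass_bicolored_P3s:
  assumes "cc_hourglass V Er Eb u v w z1 z2"
  shows "bicolored_P3 V Er Eb u v w" "bicolored_P3 V Er Eb z1 v z2"
    "bicolored_P3 V (Er - {{u, v}}) (Eb - {{u, v}}) u z1 v"
  using assms hourglass_pattern_bicolored_P3s bicolored_P3_swap_colours
  unfolding cc_hourglass_def by metis+

lemma cc_hourglass_solution_cases:
  assumes "cc_hourglass V Er Eb u v w z1 z2" "P3_free V (Er - S) (Eb - S)"
  shows "{v, w} \<in> S \<or> {{u, v}, {v, z1}} \<subseteq> S \<or> {{u, v}, {u, z1}, {v, z2}} \<subseteq> S"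
proof -
  note P3s = cc_hourglass_bicolored_P3s[OF assms(1)]
  have "{u, v} \<in> S \<or> {v, w} \<in> S" "{z1, v} \<in> S \<or> {v, z2} \<in> S"
    using P3_free_delete_edges_hits_P3[OF assms(2) _ empty_subsetI] P3s(1,2) by simp_all
  moreover have "{u, z1} \<in> S \<or> {z1, v} \<in> S" if "{u, v} \<in> S"
    using P3_free_delete_edges_hits_P3[OF assms(2) P3s(3)] that by simp
  moreover have "{z1, v} = {v, z1}"
    by (rule insert_commute)
  ultimately show ?thesis
    by auto
qed

theorem lemma7:
  fixes V :: "'a set" and Er Eb :: "'a set set" and k :: int
    and u v w z1 z2 :: 'a
  assumes "two_colored_graph V Er Eb"
    and "cc_hourglass V Er Eb u v w z1 z2"
  shows "yes_instance V Er Eb k \<longleftrightarrow>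
           (yes_instance V (Er - {{v, w}}) (Eb - {{v, w}}) (k - 1) \<or>
            yes_instance V (Er - {{u, v}, {v, z1}}) (Eb - {{u, v}, {v, z1}}) (k - 2) \<or>
            yes_instance V (Er - {{u, v}, {u, z1}, {v, z2}}) (Eb - {{u, v}, {u, z1}, {v, z2}}) (k - 3))"
proof -
  let ?\<D> = "{{{v, w}}, {{u, v}, {v, z1}}, {{u, v}, {u, z1}, {v, z2}}}"
  have "distinct [u, v, w, z1, z2]"
    using assms(2) unfolding cc_hourglass_def by blast
  then have "card {{u, v}, {v, z1}} = 2" "card {{u, v}, {u, z1}, {v, z2}} = 3"
    by (auto simp: doubleton_eq_iff)
  moreover have "\<forall>D \<in> ?\<D>. D \<subseteq> Er \<union> Eb"
    using assms(2) unfolding cc_hourglass_def hourglass_pattern_def by auto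
  moreover have "\<exists>D \<in> ?\<D>. D \<subseteq> S" if "P3_free V (Er - S) (Eb - S)" for S
    using cc_hourglass_solution_cases[OF assms(2) that] by auto
  ultimately show ?thesis
    using yes_instance_branching[OF two_colored_graph_finite_edges[OF assms(1)], of ?\<D> V k]
    by simp
qed

end
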